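(* Let $\alpha,\mu>0$ with $\varrho=\alpha/\mu<1$, and for $m\in\mathbb{N}$ let $\mathbf{E}_m$ be the stationary distribution on $\mathbb{N}$ of the single-server Processor-Sharing queue with $m$ permanent customers, Poisson arrivals of rate $\alpha$ and exponential service requirements of rate $\mu$ (described in the context). Then for all fixed $x>0$, $y>0$, \[ \lim_{A\to\infty}\frac1A\log\mathbf{E}_{[Ay]}([Ax])=-K(x,y),\qquad K(x,y)=x\log\Big(\frac{x}{\varrho}\Big)+y\log y-(x+y)\log(x+y)-y\log(1-\varrho). \]
   Context: The single-server PS queue with $m$ permanent customers is the birth-and-death process on $\mathbb{N}$ (number $n$ of non-permanent customers) with transitions $n\to n+1$ at rate $\alpha$ and $n\to n-1$ at rate $\mu n/(n+m)$ (the $n+m$ customers share unit capacity equally; permanent customers never leave). $[z]$ denotes the integer part of $z$. *)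

theory Defs
  imports "HOL-Analysis.Analysis"
begin

text \<open>Transition rates of the PS queue with m permanent customers, on states n (number of
  non-permanent customers): n -> n+1 at rate alpha, n -> n-1 at rate mu*n/(n+m).\<close>

definition ps_birth :: "real \<Rightarrow> nat \<Rightarrow> real" where
  "ps_birth \<alpha> n = \<alpha>"

definition ps_death :: "real \<Rightarrow> nat \<Rightarrow> nat \<Rightarrow> real" where
  "ps_death \<mu> m n = (if n = 0 then 0 else \<mu> * real n / real (n + m))"

definition ps_stationary :: "real \<Rightarrow> real \<Rightarrow> nat \<Rightarrow> (nat \<Rightarrow> real) \<Rightarrow> bool" where
  "ps_stationary \<alpha> \<mu> m \<pi> \<longleftrightarrow>
     (\<forall>n. 0 \<le> \<pi> n) \<and> \<pi> sums 1 \<and>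
     (\<forall>n. \<pi> n * (ps_birth \<alpha> n + ps_death \<mu> m n) =
          (if n = 0 then 0 else \<pi> (n - 1) * ps_birth \<alpha> (n - 1))
          + \<pi> (n + 1) * ps_death \<mu> m (n + 1))"

definition K_rate :: "real \<Rightarrow> real \<Rightarrow> real \<Rightarrow> real" where
  "K_rate \<rho> x y = x * ln (x / \<rho>) + y * ln y - (x + y) * ln (x + y) - y * ln (1 - \<rho>)"

end

theory Submission
  imports Defs "HOL-Real_Asymp.Real_Asymp"
begin

text \<open>Global balance of a birth-and-death chain forces detailed balance, which yields the product
  form \<open>E\<^sub>m(n) = (1 - \<rho>)^(m + 1) \<rho>^n ((n + m) choose n)\<close>; the normalising constant
  is the negative binomial series. The first-order Stirling bounds
  \<open>n ln n - n \<le> ln n! \<le> (n + 1) ln (n + 1) - n\<close> then show that for \<open>n \<approx> A x\<close>, \<open>m \<approx> A y\<close>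
  the term \<open>ln ((n + m) choose n) / A\<close> tends to \<open>(x + y) ln (x + y) - x ln x - y ln y\<close>,
  while \<open>((m + 1) ln (1 - \<rho>) + n ln \<rho>) / A\<close> tends to \<open>y ln (1 - \<rho>) + x ln \<rho>\<close>.\<close>

lemma global_balance_imp_detailed_balance:
  fixes \<pi> b d :: "nat \<Rightarrow> 'a :: comm_ring"
  assumes balance: "\<And>n. \<pi> n * (b n + d n) =
      (if n = 0 then 0 else \<pi> (n - 1) * b (n - 1)) + \<pi> (n + 1) * d (n + 1)"
    and "d 0 = 0"
  shows "\<pi> n * b n = \<pi> (Suc n) * d (Suc n)"
proof (induction n)
  case 0
  then show ?case
    using balance[of 0] \<open>d 0 = 0\<close> by simp
next
  case (Suc n)
  then show ?case
    using balance[of "Suc n"] by (simp add: algebra_simps)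
qed

lemma sums_binomial_neg_power:
  fixes r :: real
  assumes "\<bar>r\<bar> < 1"
  shows "(\<lambda>n. real ((n + m) choose n) * r ^ n) sums (1 / (1 - r) ^ (m + 1))"
proof -
  have "(\<lambda>n. ((- real (m + 1)) gchoose n) * (- r) ^ n) sums (1 + - r) powr (- real (m + 1))"
    using assms by (intro gen_binomial_real) simp
  moreover have "((- real (m + 1)) gchoose n) * (- r) ^ n = real ((n + m) choose n) * r ^ n" for n
  proof -
    have "(- real (m + 1)) gchoose n = (- 1) ^ n * (real (n + m) gchoose n)"
      by (subst gbinomial_minus) (simp add: add_ac)
    then show ?thesis
      by (simp add: binomial_gbinomial power_minus[of r])
  qed
  moreover have "(1 + - r) powr (- real (m + 1)) = 1 / (1 - r) ^ (m + 1)"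
    using assms by (subst powr_minus_divide, subst powr_realpow) auto
  ultimately show ?thesis
    by simp
qed

lemma ps_stationary_product_form:
  assumes "\<mu> > 0" and "ps_stationary \<alpha> \<mu> m \<pi>"
  shows "\<pi> n = \<pi> 0 * (\<alpha> / \<mu>) ^ n * real ((n + m) choose n)"
proof (induction n)
  case (Suc n)
  have "\<pi> n * \<alpha> = \<pi> (Suc n) * (\<mu> * real (Suc n) / real (Suc n + m))"
    using global_balance_imp_detailed_balance[of \<pi> "ps_birth \<alpha>" "ps_death \<mu> m" n] assms(2)
    by (simp add: ps_stationary_def ps_birth_def ps_death_def)
  then have "\<pi> (Suc n) * (\<mu> * real (Suc n)) = \<pi> n * \<alpha> * real (Suc n + m)"
    by (simp add: field_simps)
  also have "\<dots> = \<pi> 0 * (\<alpha> / \<mu>) ^ n * \<alpha> * (real (Suc n + m) * real ((n + m) choose n))"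
    using Suc.IH by simp
  also have "real (Suc n + m) * real ((n + m) choose n) = real (Suc n) * real ((Suc n + m) choose Suc n)"
    by (metis Suc_times_binomial add_Suc of_nat_mult)
  also have "\<pi> 0 * (\<alpha> / \<mu>) ^ n * \<alpha> * (real (Suc n) * real ((Suc n + m) choose Suc n))
      = \<pi> 0 * (\<alpha> / \<mu>) ^ Suc n * real ((Suc n + m) choose Suc n) * (\<mu> * real (Suc n))"
    using \<open>\<mu> > 0\<close> by (simp add: field_simps)
  finally have "\<pi> (Suc n) * (\<mu> * real (Suc n))
      = \<pi> 0 * (\<alpha> / \<mu>) ^ Suc n * real ((Suc n + m) choose Suc n) * (\<mu> * real (Suc n))" .
  moreover have "\<mu> * real (Suc n) \<noteq> 0"
    using \<open>\<mu> > 0\<close> by simp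
  ultimately show ?case
    by (metis mult_right_cancel)
qed simp

lemma ps_stationary_eq:
  assumes "\<alpha> > 0" and "\<mu> > 0" and "\<alpha> / \<mu> < 1" and "ps_stationary \<alpha> \<mu> m \<pi>"
  shows "\<pi> n = (1 - \<alpha> / \<mu>) ^ (m + 1) * (\<alpha> / \<mu>) ^ n * real ((n + m) choose n)"
proof -
  note product_form = ps_stationary_product_form[OF assms(2,4)]
  have "\<bar>\<alpha> / \<mu>\<bar> < 1"
    using assms(1-3) by simp
  then have "(\<lambda>n. \<pi> 0 * (real ((n + m) choose n) * (\<alpha> / \<mu>) ^ n))
      sums (\<pi> 0 * (1 / (1 - \<alpha> / \<mu>) ^ (m + 1)))"
    by (intro sums_mult sums_binomial_neg_power)
  moreover have "(\<lambda>n. \<pi> 0 * (real ((n + m) choose n) * (\<alpha> / \<mu>) ^ n)) = \<pi>"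
  proof
    show "\<pi> 0 * (real ((n + m) choose n) * (\<alpha> / \<mu>) ^ n) = \<pi> n" for n
      using product_form[of n] by (simp add: mult_ac)
  qed
  ultimately have "\<pi> sums (\<pi> 0 * (1 / (1 - \<alpha> / \<mu>) ^ (m + 1)))"
    by simp
  moreover have "\<pi> sums 1"
    using assms(4) by (simp add: ps_stationary_def)
  ultimately have "\<pi> 0 * (1 / (1 - \<alpha> / \<mu>) ^ (m + 1)) = 1"
    by (rule sums_unique2)
  then have "\<pi> 0 = (1 - \<alpha> / \<mu>) ^ (m + 1)"
    using assms(3) by (simp add: field_simps)
  then show ?thesis
    using product_form[of n] by simp
qed

lemma ln_ps_stationary:
  assumes "\<alpha> > 0" and "\<mu> > 0" and "\<alpha> / \<mu> < 1" and "ps_stationary \<alpha> \<mu> m \<pi>"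
  shows "ln (\<pi> n) = real (m + 1) * ln (1 - \<alpha> / \<mu>) + real n * ln (\<alpha> / \<mu>)
      + ln (fact (n + m)) - ln (fact n) - ln (fact m)"
proof -
  define \<rho> where "\<rho> = \<alpha> / \<mu>"
  have \<rho>: "0 < \<rho>" "0 < 1 - \<rho>"
    using assms(1-3) by (simp_all add: \<rho>_def)
  have "real ((n + m) choose n) = fact (n + m) / (fact n * fact m)"
    using binomial_fact[of n "n + m", where 'a = real] by simp
  then have "ln (\<pi> n) = ln ((1 - \<rho>) ^ (m + 1) * \<rho> ^ n * (fact (n + m) / (fact n * fact m)))"
    by (simp only: ps_stationary_eq[OF assms] \<rho>_def)
  also have "\<dots> = real (m + 1) * ln (1 - \<rho>) + real n * ln \<rho>
      + ln (fact (n + m)) - ln (fact n) - ln (fact m)"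
    using \<rho> by (simp add: ln_mult ln_div ln_realpow distrib_right)
  finally show ?thesis
    by (simp only: \<rho>_def)
qed

lemma ln_fact_ge: "real n * ln (real n) - real n \<le> ln (fact n)"
proof (induction n)
  case (Suc n)
  have "real n * ln (1 + 1 / real n) \<le> real n * (1 / real n)"
    by (intro mult_left_mono ln_add_one_self_le_self) simp_all
  then have "real n * (ln (real n + 1) - ln (real n)) \<le> 1"
    by (cases "n = 0") (simp_all add: field_simps ln_div)
  moreover have "ln (fact (Suc n)) = ln (real n + 1) + ln (fact n)"
    by (simp add: ln_mult add.commute)
  ultimately show ?case
    using Suc by (simp add: algebra_simps)
qed simp

lemma ln_fact_le: "ln (fact n) \<le> (real n + 1) * ln (real n + 1) - real n"
proof (induction n)
  case (Suc n)
  have "ln (1 - 1 / (real n + 2)) \<le> - 1 / (real n + 2)"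
    using ln_le_minus_one[of "1 - 1 / (real n + 2)"] by simp
  then have "1 \<le> (real n + 2) * (ln (real n + 2) - ln (real n + 1))"
    by (simp add: field_simps ln_div)
  moreover have "ln (fact (Suc n)) = ln (real n + 1) + ln (fact n)"
    by (simp add: ln_mult add.commute)
  ultimately show ?case
    using Suc by (simp add: algebra_simps)
qed simp

text \<open>Removing the term \<open>k ln A\<close> leaves a quantity with a finite limit when \<open>k \<approx> c A\<close>;
  the removed terms cancel in \<open>ln ((n + m) choose n)\<close>.\<close>

definition ln_fact_scaled :: "real \<Rightarrow> nat \<Rightarrow> real" where
  "ln_fact_scaled A k = (ln (fact k) - real k * ln A) / A"

lemma tendsto_ln_fact_scaled:
  fixes k :: "real \<Rightarrow> nat"
  assumes k: "((\<lambda>A. real (k A) / A) \<longlongrightarrow> c) at_top" and "c > 0"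
  shows "((\<lambda>A. ln_fact_scaled A (k A)) \<longlongrightarrow> c * ln c - c) at_top"
  unfolding ln_fact_scaled_def
proof (rule tendsto_sandwich)
  have scale: "t * ln t - t * ln A = A * ((t / A) * ln (t / A))" if "A > 0" "t \<ge> 0" for t A :: real
    using that by (cases "t = 0") (simp_all add: ln_div algebra_simps)
  show "\<forall>\<^sub>F A in at_top. (real (k A) / A) * ln (real (k A) / A) - real (k A) / A
      \<le> (ln (fact (k A)) - real (k A) * ln A) / A"
    using eventually_gt_at_top[of 0]
  proof eventually_elim
    case (elim A)
    have "A * ((real (k A) / A) * ln (real (k A) / A)) - real (k A) \<le> ln (fact (k A)) - real (k A) * ln A"
      using ln_fact_ge[of "k A"] scale[OF elim, of "real (k A)"] by simp
    then have "(A * ((real (k A) / A) * ln (real (k A) / A)) - real (k A)) / A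
        \<le> (ln (fact (k A)) - real (k A) * ln A) / A"
      using elim by (intro divide_right_mono) simp_all
    with elim show ?case
      by (simp add: diff_divide_distrib)
  qed
  show "\<forall>\<^sub>F A in at_top. (ln (fact (k A)) - real (k A) * ln A) / A
      \<le> ((real (k A) + 1) / A) * ln ((real (k A) + 1) / A) + ln A / A - real (k A) / A"
    using eventually_gt_at_top[of 0]
  proof eventually_elim
    case (elim A)
    have "ln (fact (k A)) - real (k A) * ln A
        \<le> A * (((real (k A) + 1) / A) * ln ((real (k A) + 1) / A)) + ln A - real (k A)"
      using ln_fact_le[of "k A"] scale[OF elim, of "real (k A) + 1"] by (simp add: algebra_simps)
    then have "(ln (fact (k A)) - real (k A) * ln A) / A
        \<le> (A * (((real (k A) + 1) / A) * ln ((real (k A) + 1) / A)) + ln A - real (k A)) / A"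
      using elim by (intro divide_right_mono) simp_all
    with elim show ?case
      by (simp add: add_divide_distrib diff_divide_distrib)
  qed
  have "((\<lambda>A. 1 / A) \<longlongrightarrow> (0::real)) at_top"
    by real_asymp
  from tendsto_add[OF k this] have k1: "((\<lambda>A. (real (k A) + 1) / A) \<longlongrightarrow> c) at_top"
    by (simp add: add_divide_distrib)
  have "((\<lambda>A. ln A / A) \<longlongrightarrow> (0::real)) at_top"
    by real_asymp
  then have "((\<lambda>A. ((real (k A) + 1) / A) * ln ((real (k A) + 1) / A) + ln A / A - real (k A) / A)
      \<longlongrightarrow> c * ln c + 0 - c) at_top"
    using \<open>c > 0\<close> by (intro tendsto_diff tendsto_add tendsto_mult tendsto_ln k k1) simp_all
  then show "((\<lambda>A. ((real (k A) + 1) / A) * ln ((real (k A) + 1) / A) + ln A / A - real (k A) / A)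
      \<longlongrightarrow> c * ln c - c) at_top"
    by simp
  show "((\<lambda>A. (real (k A) / A) * ln (real (k A) / A) - real (k A) / A) \<longlongrightarrow> c * ln c - c) at_top"
    using \<open>c > 0\<close> by (intro tendsto_diff tendsto_mult tendsto_ln k) simp_all
qed

lemma tendsto_nat_floor_mult_div:
  fixes c :: real
  assumes "c \<ge> 0"
  shows "((\<lambda>A. real (nat \<lfloor>A * c\<rfloor>) / A) \<longlongrightarrow> c) at_top"
proof (rule tendsto_sandwich)
  show "\<forall>\<^sub>F A in at_top. (A * c - 1) / A \<le> real (nat \<lfloor>A * c\<rfloor>) / A"
    using eventually_gt_at_top[of 0]
    by eventually_elim (intro divide_right_mono; linarith)
  show "\<forall>\<^sub>F A in at_top. real (nat \<lfloor>A * c\<rfloor>) / A \<le> c"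
    using eventually_gt_at_top[of 0]
  proof eventually_elim
    case (elim A)
    then have "real (nat \<lfloor>A * c\<rfloor>) \<le> A * c"
      using assms by simp
    with elim show ?case
      by (simp add: field_simps)
  qed
  show "((\<lambda>A. (A * c - 1) / A) \<longlongrightarrow> c) at_top"
    by real_asymp
qed simp

lemma ln_ps_stationary_scaled:
  assumes "\<alpha> > 0" and "\<mu> > 0" and "\<alpha> / \<mu> < 1" and "ps_stationary \<alpha> \<mu> m \<pi>" and "A > 0"
  shows "ln (\<pi> n) / A = real (m + 1) / A * ln (1 - \<alpha> / \<mu>) + real n / A * ln (\<alpha> / \<mu>)
      + ln_fact_scaled A (n + m) - ln_fact_scaled A n - ln_fact_scaled A m"
  using \<open>A > 0\<close>
  by (simp add: ln_ps_stationary[OF assms(1-4)] ln_fact_scaled_def field_simps)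

theorem lemma2:
  fixes \<alpha> \<mu> x y :: real and E :: "nat \<Rightarrow> nat \<Rightarrow> real"
  assumes "\<alpha> > 0" and "\<mu> > 0" and "\<alpha> / \<mu> < 1"
    and "\<And>m. ps_stationary \<alpha> \<mu> m (E m)"
    and "x > 0" and "y > 0"
  shows "((\<lambda>A. ln (E (nat \<lfloor>A * y\<rfloor>) (nat \<lfloor>A * x\<rfloor>)) / A)
           \<longlongrightarrow> - K_rate (\<alpha> / \<mu>) x y) at_top"
proof -
  define n where "n A = nat \<lfloor>A * x\<rfloor>" for A :: real
  define m where "m A = nat \<lfloor>A * y\<rfloor>" for A :: real
  have n: "((\<lambda>A. real (n A) / A) \<longlongrightarrow> x) at_top" and m: "((\<lambda>A. real (m A) / A) \<longlongrightarrow> y) at_top"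
    unfolding n_def m_def using assms(5,6) by (simp_all add: tendsto_nat_floor_mult_div)
  from tendsto_add[OF n m] have nm: "((\<lambda>A. real (n A + m A) / A) \<longlongrightarrow> x + y) at_top"
    by (simp add: add_divide_distrib)
  have "((\<lambda>A. 1 / A) \<longlongrightarrow> (0::real)) at_top"
    by real_asymp
  from tendsto_add[OF m this] have m1: "((\<lambda>A. real (m A + 1) / A) \<longlongrightarrow> y) at_top"
    by (simp add: add_divide_distrib add.commute)
  have "((\<lambda>A. real (m A + 1) / A * ln (1 - \<alpha> / \<mu>) + real (n A) / A * ln (\<alpha> / \<mu>)
        + ln_fact_scaled A (n A + m A) - ln_fact_scaled A (n A) - ln_fact_scaled A (m A))
      \<longlongrightarrow> y * ln (1 - \<alpha> / \<mu>) + x * ln (\<alpha> / \<mu>)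
        + ((x + y) * ln (x + y) - (x + y)) - (x * ln x - x) - (y * ln y - y)) at_top"
    using assms(5,6) by (intro tendsto_intros tendsto_ln_fact_scaled n m m1 nm) simp_all
  also have "y * ln (1 - \<alpha> / \<mu>) + x * ln (\<alpha> / \<mu>)
        + ((x + y) * ln (x + y) - (x + y)) - (x * ln x - x) - (y * ln y - y) = - K_rate (\<alpha> / \<mu>) x y"
    unfolding K_rate_def using assms(1,2,5) by (simp add: ln_div ln_mult algebra_simps)
  finally show ?thesis
    unfolding n_def m_def
    by (rule Lim_transform_eventually)
      (use eventually_gt_at_top[of 0] in \<open>eventually_elim, simp add: ln_ps_stationary_scaled[OF assms(1-4)]\<close>)
qed

end
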